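(* Assume the function $\psi$ below satisfies in addition $\psi(t)=1$ for $t\in[\frac34,1]$. Then there exists a bounded continuous function $m\colon(0,\infty)\to\mathbb{C}$ such that $\sup_{k\in\mathbb{Z}}\|\mathcal{F}(m\psi_k)\|_1<\infty$, but $T_m$ is not a bounded Fourier multiplier on $H^1(\mathbb{R})$ (i.e. $T_m\notin\mathcal{M}(H^1(\mathbb{R}))$).
   Context: Fourier transform $\widehat f(u)=\int f(t)e^{-itu}dt$. $\psi$ is a Schwartz function with $\mathrm{supp}\,\psi\subset[\frac12,2]$, $\psi\ge0$, and $\psi(t)+\psi(t/2)=1$ for $t\in[1,2]$; $\psi_k(t)=\psi(2^{-k}t)$ for $k\in\mathbb{Z}$ (so $m\psi_k$ is a function on $(0,\infty)$, extended by $0$ to $\mathbb{R}$). $H^1(\mathbb{R})=\{h\in L^1:\widehat h(u)=0\ \forall u\le0\}$, $H^2(\mathbb{R})=\{h\in L^2:\widehat h=0\text{ a.e. on }(-\infty,0]\}$. For $m\in L^\infty(0,\infty)$, $T_mh=\mathcal{F}^{-1}(m\widehat h)$ on $H^2(\mathbb{R})$; $T_m$ is a bounded Fourier multiplier on $H^1(\mathbb{R})$ if $\|T_mh\|_1\le C\|h\|_1$ for all $h\in H^1(\mathbb{R})\cap H^2(\mathbb{R})$. *)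

theory Defs
  imports "HOL-Analysis.Analysis"
begin

definition fourier :: "(real \<Rightarrow> complex) \<Rightarrow> real \<Rightarrow> complex" where
  "fourier f u = (LINT t|lborel. f t * exp (- \<i> * complex_of_real (t * u)))"

definition L1norm :: "(real \<Rightarrow> complex) \<Rightarrow> ennreal" where
  "L1norm f = (\<integral>\<^sup>+ t. ennreal (norm (f t)) \<partial>lborel)"

definition L1 :: "(real \<Rightarrow> complex) \<Rightarrow> bool" where
  "L1 f \<longleftrightarrow> integrable lborel f"

definition L2 :: "(real \<Rightarrow> complex) \<Rightarrow> bool" where
  "L2 f \<longleftrightarrow> f \<in> borel_measurable lborel \<and> integrable lborel (\<lambda>t. (norm (f t))\<^sup>2)"

definition smooth_fun :: "(real \<Rightarrow> real) \<Rightarrow> bool" where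
  "smooth_fun f \<longleftrightarrow> (\<forall>k. \<forall>x. ((deriv ^^ k) f) differentiable (at x))"

definition schwartz :: "(real \<Rightarrow> real) \<Rightarrow> bool" where
  "schwartz f \<longleftrightarrow> smooth_fun f \<and>
     (\<forall>n k. bounded (range (\<lambda>t. \<bar>t\<bar> ^ n * \<bar>(deriv ^^ k) f t\<bar>)))"

definition admissible_psi :: "(real \<Rightarrow> real) \<Rightarrow> bool" where
  "admissible_psi \<psi> \<longleftrightarrow> schwartz \<psi>
     \<and> (\<forall>t. \<psi> t \<noteq> 0 \<longrightarrow> t \<in> {1/2..2})
     \<and> (\<forall>t. \<psi> t \<ge> 0)
     \<and> (\<forall>t\<in>{1..2}. \<psi> t + \<psi> (t/2) = 1)"

definition psi_k :: "(real \<Rightarrow> real) \<Rightarrow> int \<Rightarrow> real \<Rightarrow> real" where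
  "psi_k \<psi> k t = \<psi> ((2 powr (- real_of_int k)) * t)"

definition m_psi_k :: "(real \<Rightarrow> complex) \<Rightarrow> (real \<Rightarrow> real) \<Rightarrow> int \<Rightarrow> real \<Rightarrow> complex" where
  "m_psi_k m \<psi> k t = (if t > 0 then m t * complex_of_real (psi_k \<psi> k t) else 0)"

definition H1_H2 :: "(real \<Rightarrow> complex) \<Rightarrow> bool" where
  "H1_H2 h \<longleftrightarrow> L1 h \<and> L2 h \<and> (\<forall>u\<le>0. fourier h u = 0)"

text \<open>g = T_m h = F^{-1}(m hat h), characterised weakly: g is in L^2 and
  int g(x) hat phi(x) dx = int_{u>0} m(u) hat h(u) phi(u) du for all phi in L^1 \<inter> L^2
  (Parseval); this determines g in L^2 uniquely.\<close>
definition is_Tm :: "(real \<Rightarrow> complex) \<Rightarrow> (real \<Rightarrow> complex) \<Rightarrow> (real \<Rightarrow> complex) \<Rightarrow> bool" where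
  "is_Tm m h g \<longleftrightarrow> L2 g \<and>
     (\<forall>\<phi>. L1 \<phi> \<and> L2 \<phi> \<longrightarrow>
        (LINT x|lborel. g x * fourier \<phi> x) =
        (LINT u|lborel. indicator {0<..} u * m u * fourier h u * \<phi> u))"

definition bounded_H1_multiplier :: "(real \<Rightarrow> complex) \<Rightarrow> bool" where
  "bounded_H1_multiplier m \<longleftrightarrow>
     (\<exists>C::real. \<forall>h g. H1_H2 h \<and> is_Tm m h g \<longrightarrow> L1norm g \<le> ennreal C * L1norm h)"

end

theory Submission
  imports Defs "HOL-Probability.Sinc_Integral"
begin

(* Take m(u) = sum_j exp(-i a_j u) psi_j(u) with a_j = 2 L j.  On a neighbourhood of supp psi_k only
   three terms survive, each a modulated and dilated copy of a compactly supported C^2 bump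
   psi(c v) psi(v); modulation and dilation do not change the L^1 norm of the Fourier transform,
   so sup_k |F(m psi_k)|_1 is finite.  On the plateau [3/4 2^k, 2^k], however, m(u) = exp(-i a_k u),
   so T_m translates by a_k every Fejer packet S(x) exp(i w_k x), where S(x) = (sin x / x)^2 and
   w_k = 7/8 2^k: its spectrum [w_k - 2, w_k + 2] lies in that plateau.  For h = S sum_{k in K}
   exp(i w_k x) with |K| = N^2 the exponentials are orthogonal against S, so |h|_1 <= |S|_1 N by
   AM-GM, while the N^2 packets of T_m h sit at mutual distance 2 L and hardly interfere, so
   |T_m h|_1 >= N^2 |S|_1 / 2 once the tail of S beyond L is small. *)

section \<open>Fourier transform on the real line\<close>

lemma borel_measurable_cis [measurable]: "cis \<in> borel_measurable borel"
  by (intro borel_measurable_continuous_onI continuous_on_cis continuous_on_id)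

lemma fourier_cis: "fourier f u = (LINT t|lborel. f t * cis (- (t * u)))"
  unfolding fourier_def cis_conv_exp by simp

lemma fourier_measurable [measurable]:
  assumes [measurable]: "f \<in> borel_measurable borel"
  shows "fourier f \<in> borel_measurable borel"
  unfolding fourier_cis by measurable

lemma integrable_fourier_integrand:
  "integrable lborel f \<Longrightarrow> integrable lborel (\<lambda>t. f t * cis (- (t * u)))"
  by (rule Bochner_Integration.integrable_bound[OF integrable_norm]) (auto simp: norm_mult)

lemma fourier_sum:
  assumes "\<And>i. i \<in> I \<Longrightarrow> integrable lborel (f i)"
  shows "fourier (\<lambda>t. \<Sum>i\<in>I. f i t) u = (\<Sum>i\<in>I. fourier (f i) u)"
  unfolding fourier_cis sum_distrib_right
  by (intro Bochner_Integration.integral_sum integrable_fourier_integrand assms)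

lemma fourier_shift: "fourier (\<lambda>t. f (t - c)) u = cis (- (c * u)) * fourier f u"
proof -
  have "fourier (\<lambda>t. f (t - c)) u = (LINT t|lborel. cis (- (c * u)) * (f t * cis (- (t * u))))"
    unfolding fourier_cis using lborel_integral_real_affine[of 1 "\<lambda>t. f (t - c) * cis (- (t * u))" c]
    by (simp add: cis_mult algebra_simps)
  then show ?thesis
    unfolding fourier_cis by simp
qed

lemma fourier_modulation: "fourier (\<lambda>t. cis (w * t) * f t) u = fourier f (u - w)"
  unfolding fourier_cis by (simp add: mult.left_commute cis_mult algebra_simps)

lemma fourier_dilation:
  assumes "s > 0"
  shows "fourier (\<lambda>t. f (s * t)) u = fourier f (u / s) / of_real s"
  unfolding fourier_cis
  using lborel_integral_real_affine[of "1 / s" "\<lambda>t. f (s * t) * cis (- (t * u))" 0] assms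
  by (simp add: scaleR_conv_of_real)

lemma fourier_multiplication_formula:
  fixes g \<phi> :: "real \<Rightarrow> complex"
  assumes g: "integrable lborel g" and \<phi>: "integrable lborel \<phi>"
  shows "(LINT x|lborel. g x * fourier \<phi> x) = (LINT t|lborel. fourier g t * \<phi> t)"
proof -
  have [measurable]: "g \<in> borel_measurable borel" "\<phi> \<in> borel_measurable borel"
    using g \<phi> by auto
  let ?F = "\<lambda>x t. g x * (\<phi> t * cis (- (t * x)))"
  have "(\<integral>\<^sup>+ z. ennreal (norm (case_prod ?F z)) \<partial>(lborel \<Otimes>\<^sub>M lborel))
      = (\<integral>\<^sup>+ x. \<integral>\<^sup>+ t. ennreal (norm (g x)) * ennreal (norm (\<phi> t)) \<partial>lborel \<partial>lborel)"
    by (subst lborel.nn_integral_fst[symmetric]) (auto simp: norm_mult ennreal_mult intro!: nn_integral_cong)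
  also have "\<dots> = (\<integral>\<^sup>+ x. ennreal (norm (g x)) \<partial>lborel) * (\<integral>\<^sup>+ t. ennreal (norm (\<phi> t)) \<partial>lborel)"
    by (simp add: nn_integral_cmult nn_integral_multc)
  also have "\<dots> < \<infinity>"
    using g \<phi> by (simp add: integrable_iff_bounded ennreal_mult_less_top)
  finally have "integrable (lborel \<Otimes>\<^sub>M lborel) (case_prod ?F)"
    by (simp add: integrable_iff_bounded)
  then have Fubini: "(LINT x|lborel. LINT t|lborel. ?F x t) = (LINT t|lborel. LINT x|lborel. ?F x t)"
    by (rule lborel_pair.Fubini_integral[symmetric])
  have "(LINT x|lborel. g x * fourier \<phi> x) = (LINT x|lborel. LINT t|lborel. ?F x t)"
    unfolding fourier_cis by simp
  also have "\<dots> = (LINT t|lborel. fourier g t * \<phi> t)"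
    unfolding Fubini fourier_cis
    by (intro Bochner_Integration.integral_cong refl)
       (simp add: integral_mult_left_zero[symmetric] mult.commute mult.left_commute)
  finally show ?thesis .
qed

lemma integrable_shift: "integrable lborel f \<Longrightarrow> integrable lborel (\<lambda>x. f (x - c))"
  for f :: "real \<Rightarrow> 'a::{banach, second_countable_topology}"
  using lborel_integrable_real_affine_iff[of 1 f "- c"] by simp

lemma integral_shift: "(LINT x|lborel. f (x - c)) = (LINT x|lborel. f x)"
  for f :: "real \<Rightarrow> 'a::{banach, second_countable_topology}"
  using lborel_integral_real_affine[of 1 "\<lambda>x. f (x - c)" c] by simp

lemma integrable_modulated_dilation:
  fixes f :: "real \<Rightarrow> complex"
  assumes "integrable lborel f" "s \<noteq> 0"
  shows "integrable lborel (\<lambda>t. cis (w * t) * f (s * t))"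
proof (rule Bochner_Integration.integrable_bound)
  show "integrable lborel (\<lambda>t. f (s * t))"
    using lborel_integrable_real_affine_iff[of s f 0] assms by simp
  then show "(\<lambda>t. cis (w * t) * f (s * t)) \<in> borel_measurable lborel"
    by measurable
qed (simp add: norm_mult)

lemma integrable_continuous_compact_support:
  fixes f :: "real \<Rightarrow> 'a::{banach, second_countable_topology}"
  assumes "continuous_on {a..b} f" "\<And>t. t \<notin> {a..b} \<Longrightarrow> f t = 0"
  shows "integrable lborel f"
proof -
  have "(\<lambda>t. indicator {a..b} t *\<^sub>R f t) = f"
    using assms(2) by (auto simp: fun_eq_iff split: split_indicator)
  then show ?thesis
    using borel_integrable_atLeastAtMost'[OF assms(1)] unfolding set_integrable_def by simp
qed

lemma integrable_quadratic_decay: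
  fixes f :: "real \<Rightarrow> 'a::{banach, second_countable_topology}"
  assumes [measurable]: "f \<in> borel_measurable borel"
    and bound: "\<And>x. norm (f x) \<le> B" and decay: "\<And>x. x\<^sup>2 * norm (f x) \<le> B"
  shows "integrable lborel f"
proof (rule Bochner_Integration.integrable_bound)
  show "integrable lborel (\<lambda>x. 2 * B * inverse (1 + x\<^sup>2))"
    using integrable_inverse_1_plus_square by (simp add: set_integrable_def)
  have "norm (f x) \<le> 2 * B * inverse (1 + x\<^sup>2)" for x
  proof -
    have "(1 + x\<^sup>2) * norm (f x) \<le> 2 * B"
      using bound[of x] decay[of x] by (simp add: distrib_right)
    then show ?thesis
      by (simp add: field_simps add_pos_nonneg)
  qed
  then show "AE x in lborel. norm (f x) \<le> norm (2 * B * inverse (1 + x\<^sup>2))"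
    by (intro AE_I2) (simp add: order_trans[OF _ abs_ge_self])
qed simp

lemma L1norm_eq_integral:
  "integrable lborel f \<Longrightarrow> L1norm f = ennreal (LINT x|lborel. norm (f x))"
  unfolding L1norm_def by (rule nn_integral_eq_integral) (auto intro: integrable_norm)

lemma L1norm_less_top: "integrable lborel f \<Longrightarrow> L1norm f < \<infinity>"
  by (simp add: L1norm_eq_integral)

lemma L1norm_sum_le:
  assumes [measurable]: "\<And>i. f i \<in> borel_measurable borel"
  shows "L1norm (\<lambda>x. \<Sum>i\<in>I. f i x) \<le> (\<Sum>i\<in>I. L1norm (f i))"
proof -
  have "L1norm (\<lambda>x. \<Sum>i\<in>I. f i x) \<le> (\<integral>\<^sup>+ x. (\<Sum>i\<in>I. ennreal (norm (f i x))) \<partial>lborel)"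
    unfolding L1norm_def
    by (intro nn_integral_mono) (simp add: sum_ennreal norm_sum ennreal_leI)
  also have "\<dots> = (\<Sum>i\<in>I. L1norm (f i))"
    unfolding L1norm_def by (rule nn_integral_sum) simp
  finally show ?thesis .
qed

lemma L1norm_translation:
  "f \<in> borel_measurable borel \<Longrightarrow> L1norm (\<lambda>x. f (x + c)) = L1norm f"
  unfolding L1norm_def using nn_integral_real_affine[of "\<lambda>x. ennreal (norm (f x))" 1 c]
  by (simp add: add.commute)

lemma L1norm_dilation:
  assumes [measurable]: "f \<in> borel_measurable borel" and "s > 0"
  shows "L1norm (\<lambda>x. f (x / s) / of_real s) = L1norm f"
proof -
  have norm_eq: "ennreal (norm (f x / of_real s)) = ennreal (1 / s) * ennreal (norm (f x))" for x
    using \<open>s > 0\<close> by (simp add: norm_divide ennreal_mult[symmetric])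
  have "L1norm (\<lambda>x. f (x / s) / of_real s)
      = ennreal s * (\<integral>\<^sup>+ x. ennreal (1 / s) * ennreal (norm (f x)) \<partial>lborel)"
    unfolding L1norm_def norm_eq[symmetric]
    using nn_integral_real_affine[of "\<lambda>x. ennreal (norm (f (x / s) / of_real s))" s 0] \<open>s > 0\<close>
    by simp
  also have "\<dots> = ennreal s * (ennreal (1 / s) * L1norm f)"
    unfolding L1norm_def by (subst nn_integral_cmult) simp_all
  also have "\<dots> = L1norm f"
    using \<open>s > 0\<close> by (simp add: mult.assoc[symmetric] ennreal_mult[symmetric])
  finally show ?thesis .
qed

lemma L1norm_fourier_modulated_dilation:
  assumes [measurable]: "f \<in> borel_measurable borel" and "s > 0"
  shows "L1norm (fourier (\<lambda>t. cis (w * t) * f (s * t))) = L1norm (fourier f)"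
proof -
  have "fourier (\<lambda>t. cis (w * t) * f (s * t)) = (\<lambda>u. fourier f ((u - w) / s) / of_real s)"
    using fourier_modulation[of w "\<lambda>t. f (s * t)"] fourier_dilation[OF \<open>s > 0\<close>] by auto
  then have "L1norm (fourier (\<lambda>t. cis (w * t) * f (s * t)))
      = L1norm (\<lambda>u. fourier f ((u - w) / s) / of_real s)"
    by simp
  also have "\<dots> = L1norm (\<lambda>u. fourier f (u / s) / of_real s)"
    using L1norm_translation[of "\<lambda>u. fourier f (u / s) / of_real s" "- w"] by simp
  also have "\<dots> = L1norm (fourier f)"
    using \<open>s > 0\<close> by (intro L1norm_dilation) auto
  finally show ?thesis .
qed

lemma DERIV_zero_outside_interval:
  assumes "\<And>v. (f has_real_derivative f' v) (at v)" "\<And>v. v \<notin> {a..b} \<Longrightarrow> f v = 0" "x \<notin> {a..b}"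
  shows "f' x = 0"
proof -
  have "(f has_real_derivative 0) (at x)"
    by (rule has_field_derivative_transform_within_open[OF _ open_Compl[OF closed_atLeastAtMost], of "\<lambda>_. 0"])
       (use assms(2,3) in auto)
  with assms(1) show ?thesis
    by (rule DERIV_unique)
qed

lemma norm_fourier_le: "integrable lborel f \<Longrightarrow> norm (fourier f x) \<le> (LINT t|lborel. norm (f t))"
  unfolding fourier_cis
  by (rule order_trans[OF integral_norm_bound]) (simp add: norm_mult)

lemma fourier_compact_support:
  assumes "continuous_on {a..b} f" "\<And>v. v \<notin> {a..b} \<Longrightarrow> f v = 0"
  shows "fourier f x = integral {a..b} (\<lambda>v. f v * cis (- (v * x)))"
proof -
  have "fourier f x = (LINT v:{a..b}|lborel. f v * cis (- (v * x)))"
    unfolding fourier_cis set_lebesgue_integral_def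
    by (intro Bochner_Integration.integral_cong) (auto simp: assms(2) split: split_indicator)
  also have "\<dots> = integral {a..b} (\<lambda>v. f v * cis (- (v * x)))"
    by (intro set_borel_integral_eq_integral borel_integrable_atLeastAtMost' continuous_intros assms(1))
  finally show ?thesis .
qed

lemma has_vector_derivative_cis_linear:
  "((\<lambda>v. cis (- (v * x))) has_vector_derivative (- \<i> * of_real x * cis (- (v * x)))) (at v within S)"
proof -
  have "((\<lambda>z. exp (- \<i> * (z * of_real x))) has_field_derivative
          - \<i> * of_real x * exp (- \<i> * (of_real v * of_real x))) (at (of_real v))"
    by (auto intro!: derivative_eq_intros)
  from has_vector_derivative_real_field[OF this]
  show ?thesis
    by (simp add: cis_conv_exp has_vector_derivative_at_within)
qed

lemma integral_by_parts_cis: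
  fixes Q Q' :: "real \<Rightarrow> real"
  assumes Q': "\<And>v. (Q has_real_derivative Q' v) (at v)" and "continuous_on {a..b} Q'"
    and "Q a = 0" "Q b = 0" "a \<le> b"
  shows "integral {a..b} (\<lambda>v. of_real (Q' v) * cis (- (v * x)))
       = \<i> * of_real x * integral {a..b} (\<lambda>v. of_real (Q v) * cis (- (v * x)))"
proof -
  let ?e = "\<lambda>v. cis (- (v * x))"
  have "continuous_on {a..b} Q"
    using Q' by (meson DERIV_isCont continuous_at_imp_continuous_on)
  then have int: "(\<lambda>v. of_real (Q v) * ?e v) integrable_on {a..b}"
    by (intro integrable_continuous_interval continuous_intros)
  have "((\<lambda>v. of_real (Q v) * (- \<i> * of_real x * ?e v) + of_real (Q' v) * ?e v)
          has_integral (of_real (Q b) * ?e b - of_real (Q a) * ?e a)) {a..b}"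
    using \<open>a \<le> b\<close>
    by (intro fundamental_theorem_of_calculus ballI has_vector_derivative_mult
        has_vector_derivative_of_real has_vector_derivative_cis_linear)
       (auto intro: has_field_derivative_at_within Q')
  then have "((\<lambda>v. of_real (Q' v) * ?e v) has_integral
               \<i> * of_real x * integral {a..b} (\<lambda>v. of_real (Q v) * ?e v)) {a..b}"
    using has_integral_diff[OF _ has_integral_mult_right[OF integrable_integral[OF int], of "- \<i> * of_real x"]]
    by (fastforce simp: assms algebra_simps)
  then show ?thesis
    by (rule integral_unique)
qed

lemma fourier_second_derivative:
  fixes P P' P'' :: "real \<Rightarrow> real"
  assumes P': "\<And>v. (P has_real_derivative P' v) (at v)"
    and P'': "\<And>v. (P' has_real_derivative P'' v) (at v)"
    and "continuous_on UNIV P''" and supp: "\<And>v. v \<notin> {a..b} \<Longrightarrow> P v = 0" and "a \<le> b"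
  shows "fourier (\<lambda>v. of_real (P'' v)) x = - (of_real (x\<^sup>2) * fourier (\<lambda>v. of_real (P v)) x)"
proof -
  \<comment> \<open>on the slightly larger interval, both \<open>P\<close> and \<open>P'\<close> vanish at the end points\<close>
  define a' b' where "a' = a - 1" and "b' = b + 1"
  have "a' \<le> b'" and ends: "a' \<notin> {a..b}" "b' \<notin> {a..b}"
    using \<open>a \<le> b\<close> by (auto simp: a'_def b'_def)
  have P'_zero: "v \<notin> {a..b} \<Longrightarrow> P' v = 0" for v
    by (rule DERIV_zero_outside_interval[OF P' supp])
  have cont: "continuous_on S P" "continuous_on S P'" "continuous_on S P''" for S
    using P' P'' \<open>continuous_on UNIV P''\<close>
    by (auto intro: continuous_on_subset DERIV_isCont continuous_at_imp_continuous_on)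
  let ?I = "\<lambda>Q. integral {a'..b'} (\<lambda>v. of_real (Q v) * cis (- (v * x)))"
  have "fourier (\<lambda>v. of_real (Q v)) x = ?I Q"
    if "continuous_on UNIV Q" "\<And>v. v \<notin> {a..b} \<Longrightarrow> Q v = 0" for Q
    by (rule fourier_compact_support)
       (auto intro: continuous_intros continuous_on_subset[OF that(1)] that(2) simp: a'_def b'_def)
  then have "fourier (\<lambda>v. of_real (P'' v)) x = ?I P''" "fourier (\<lambda>v. of_real (P v)) x = ?I P"
    using DERIV_zero_outside_interval[OF P'' P'_zero] supp by (auto intro: cont)
  moreover have "?I P'' = \<i> * of_real x * ?I P'"
    by (rule integral_by_parts_cis[OF P'' cont(3) P'_zero[OF ends(1)] P'_zero[OF ends(2)] \<open>a' \<le> b'\<close>])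
  moreover have "?I P' = \<i> * of_real x * ?I P"
    by (rule integral_by_parts_cis[OF P' cont(2) supp[OF ends(1)] supp[OF ends(2)] \<open>a' \<le> b'\<close>])
  ultimately show ?thesis
    by (simp add: power2_eq_square algebra_simps)
qed

lemma L1norm_fourier_C2_compact_support:
  fixes P P' P'' :: "real \<Rightarrow> real"
  assumes P': "\<And>v. (P has_real_derivative P' v) (at v)"
    and P'': "\<And>v. (P' has_real_derivative P'' v) (at v)"
    and "continuous_on UNIV P''" and supp: "\<And>v. v \<notin> {a..b} \<Longrightarrow> P v = 0" and "a \<le> b"
  shows "L1norm (fourier (\<lambda>v. of_real (P v))) < \<infinity>"
proof -
  have "continuous_on UNIV P"
    using P' by (meson DERIV_isCont continuous_at_imp_continuous_on)
  then have integrable: "integrable lborel (\<lambda>v. of_real (Q v) :: complex)"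
    if "continuous_on UNIV Q" "\<And>v. v \<notin> {a..b} \<Longrightarrow> Q v = 0" for Q
    using that by (intro integrable_continuous_compact_support[of a b])
       (auto intro: continuous_intros continuous_on_subset)
  have P''_zero: "v \<notin> {a..b} \<Longrightarrow> P'' v = 0" for v
    by (rule DERIV_zero_outside_interval[OF P'' DERIV_zero_outside_interval[OF P' supp]])
  let ?B = "(LINT v|lborel. \<bar>P v\<bar>) + (LINT v|lborel. \<bar>P'' v\<bar>)"
  have bounds: "norm (fourier (\<lambda>v. of_real (P v)) x) \<le> (LINT v|lborel. \<bar>P v\<bar>)"
    "x\<^sup>2 * norm (fourier (\<lambda>v. of_real (P v)) x) \<le> (LINT v|lborel. \<bar>P'' v\<bar>)" for x
    using norm_fourier_le[OF integrable[OF \<open>continuous_on UNIV P\<close> supp], of x]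
      norm_fourier_le[OF integrable[OF \<open>continuous_on UNIV P''\<close> P''_zero], of x]
      fourier_second_derivative[OF assms, of x]
    by (simp_all add: norm_mult norm_power)
  have nonneg: "0 \<le> (LINT v|lborel. \<bar>P v\<bar>)" "0 \<le> (LINT v|lborel. \<bar>P'' v\<bar>)"
    by simp_all
  have "integrable lborel (fourier (\<lambda>v. of_real (P v)))"
  proof (rule integrable_quadratic_decay[where B = ?B])
    show "fourier (\<lambda>v. of_real (P v)) \<in> borel_measurable borel"
      using \<open>continuous_on UNIV P\<close> by (intro fourier_measurable) (simp add: borel_measurable_continuous_onI)
    show "norm (fourier (\<lambda>v. of_real (P v)) x) \<le> ?B" for x
      using bounds(1)[of x] nonneg by linarith
    show "x\<^sup>2 * norm (fourier (\<lambda>v. of_real (P v)) x) \<le> ?B" for x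
      using bounds(2)[of x] nonneg by linarith
  qed
  then show ?thesis
    by (rule L1norm_less_top)
qed

section \<open>The Fejer kernel\<close>

definition fejer :: "real \<Rightarrow> real" where
  "fejer x = (sin x / x)\<^sup>2"

definition versine_quotient :: "real \<Rightarrow> real \<Rightarrow> real" where
  "versine_quotient b x = (1 - cos (b * x)) / x\<^sup>2"

lemma borel_measurable_fejer [measurable]: "fejer \<in> borel_measurable borel"
  unfolding fejer_def by measurable

lemma borel_measurable_versine_quotient [measurable]: "versine_quotient b \<in> borel_measurable borel"
  unfolding versine_quotient_def by measurable

lemma fejer_nonneg: "0 \<le> fejer x"
  unfolding fejer_def by simp

lemma fejer_le_1: "fejer x \<le> 1"
proof (cases "x = 0")
  case False
  then have "\<bar>sin x / x\<bar> \<le> 1"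
    using abs_sin_x_le_abs_x[of x] by (simp add: abs_divide)
  then show ?thesis
    unfolding fejer_def by (simp add: abs_square_le_1)
qed (simp add: fejer_def)

lemma integrable_fejer: "integrable lborel fejer"
proof (rule integrable_quadratic_decay[where B = 1])
  show "x\<^sup>2 * norm (fejer x) \<le> 1" for x
    by (cases "x = 0") (simp_all add: fejer_def power_divide abs_square_le_1)
qed (simp_all add: fejer_nonneg fejer_le_1)

lemma one_minus_cos_le: "1 - cos y \<le> y\<^sup>2 / 2" for y :: real
proof -
  have "1 - cos y = 2 * (sin (y / 2))\<^sup>2"
    using cos_double_sin[of "y / 2"] by simp
  also have "\<dots> \<le> 2 * (y / 2)\<^sup>2"
    using power_mono[OF abs_sin_x_le_abs_x[of "y / 2"], of 2] by (simp add: power_divide)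
  finally show ?thesis
    by (simp add: power_divide)
qed

lemma integrable_versine_quotient: "integrable lborel (versine_quotient b)"
proof (rule integrable_quadratic_decay[where B = "b\<^sup>2 / 2 + 2"])
  show "norm (versine_quotient b x) \<le> b\<^sup>2 / 2 + 2" for x
  proof (cases "x = 0")
    case False
    have "versine_quotient b x \<le> ((b * x)\<^sup>2 / 2) / x\<^sup>2"
      unfolding versine_quotient_def by (intro divide_right_mono one_minus_cos_le) simp
    also have "\<dots> = b\<^sup>2 / 2"
      using False by (simp add: power_mult_distrib)
    finally have "versine_quotient b x \<le> b\<^sup>2 / 2" .
    moreover have "0 \<le> versine_quotient b x"
      by (simp add: versine_quotient_def)
    ultimately show ?thesis
      by simp
  qed (simp add: versine_quotient_def)
  show "x\<^sup>2 * norm (versine_quotient b x) \<le> b\<^sup>2 / 2 + 2" for x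
    using cos_ge_minus_one[of "b * x"]
    by (cases "x = 0") (simp_all add: versine_quotient_def add_increasing)
qed simp

lemma integral_versine_quotient:
  "(LINT x|lborel. versine_quotient b x) = \<bar>b\<bar> * (LINT x|lborel. versine_quotient 1 x)"
proof (cases "b = 0")
  case False
  have rescale: "versine_quotient b (x / \<bar>b\<bar>) = b\<^sup>2 * versine_quotient 1 x" for x
  proof -
    have "cos (b * x / \<bar>b\<bar>) = cos x"
      using False by (cases "b > 0") simp_all
    then show ?thesis
      using False by (simp add: versine_quotient_def power_divide)
  qed
  have "(LINT x|lborel. versine_quotient b x) = (1 / \<bar>b\<bar>) * (LINT x|lborel. versine_quotient b (x / \<bar>b\<bar>))"
    using lborel_integral_real_affine[of "1 / \<bar>b\<bar>" "versine_quotient b" 0] False by simp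
  also have "\<dots> = (1 / \<bar>b\<bar>) * (LINT x|lborel. b\<^sup>2 * versine_quotient 1 x)"
    by (simp only: rescale)
  also have "\<dots> = \<bar>b\<bar> * (LINT x|lborel. versine_quotient 1 x)"
    using False by (cases "b > 0") (simp_all add: power2_eq_square)
  finally show ?thesis .
qed (simp add: versine_quotient_def)

lemma fejer_mult_cos:
  "fejer x * cos (x * l) =
     (versine_quotient (l + 2) x + versine_quotient (l - 2) x - 2 * versine_quotient l x) / 4"
proof -
  have "cos ((l + 2) * x) = cos (l * x) * cos (2 * x) - sin (l * x) * sin (2 * x)"
    by (subst distrib_right) (rule cos_add)
  moreover have "cos ((l - 2) * x) = cos (l * x) * cos (2 * x) + sin (l * x) * sin (2 * x)"
    by (subst left_diff_distrib) (rule cos_diff)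
  moreover have "cos (2 * x) = 1 - 2 * (sin x)\<^sup>2"
    by (rule cos_double_sin)
  ultimately have trig: "4 * ((sin x)\<^sup>2 * cos (l * x))
      = (1 - cos ((l + 2) * x)) + (1 - cos ((l - 2) * x)) - 2 * (1 - cos (l * x))"
    by (simp only:) (simp add: algebra_simps)
  have "fejer x * cos (x * l) = 4 * ((sin x)\<^sup>2 * cos (l * x)) / x\<^sup>2 / 4"
    unfolding fejer_def by (simp add: power_divide mult.commute)
  then show ?thesis
    unfolding trig versine_quotient_def by (simp add: diff_divide_distrib add_divide_distrib)
qed

lemma fourier_fejer: "fourier (\<lambda>x. of_real (fejer x)) l = of_real (LINT x|lborel. fejer x * cos (x * l))"
proof -
  have integrable: "integrable lborel (\<lambda>x. fejer x * h x)"
    if [measurable]: "h \<in> borel_measurable borel" and "\<And>x. \<bar>h x\<bar> \<le> 1" for h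
    by (rule Bochner_Integration.integrable_bound[OF integrable_fejer])
       (auto simp: abs_mult fejer_nonneg that(2) mult_left_le)
  have integrable_cos: "integrable lborel (\<lambda>x. fejer x * cos (x * l))"
    and integrable_sin: "integrable lborel (\<lambda>x. fejer x * sin (x * l))"
    by (intro integrable abs_cos_le_one abs_sin_le_one; measurable)+
  have odd: "(LINT x|lborel. fejer x * sin (x * l)) = 0"
    using lborel_integral_real_affine[of "-1" "\<lambda>x. fejer x * sin (x * l)" 0]
    by (simp add: fejer_def)
  have cis_eq: "cis (- y) = of_real (cos y) - \<i> * of_real (sin y)" for y
    by (simp add: complex_eq_iff)
  have "fourier (\<lambda>x. of_real (fejer x)) l
      = (LINT x|lborel. of_real (fejer x * cos (x * l)) - \<i> * of_real (fejer x * sin (x * l)))"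
    unfolding fourier_cis cis_eq by (simp add: algebra_simps)
  also have "\<dots> = of_real (LINT x|lborel. fejer x * cos (x * l)) - \<i> * of_real (LINT x|lborel. fejer x * sin (x * l))"
    by (subst Bochner_Integration.integral_diff)
       (auto simp only: complex_of_real_integrable_eq integral_mult_right_zero integral_complex_of_real
        intro!: integrable_mult_right integrable_cos integrable_sin)
  finally show ?thesis
    by (simp add: odd)
qed

lemma fourier_fejer_eq_0:
  assumes "2 \<le> \<bar>l\<bar>"
  shows "fourier (\<lambda>x. of_real (fejer x)) l = 0"
proof -
  have "(LINT x|lborel. fejer x * cos (x * l))
      = (\<bar>l + 2\<bar> + \<bar>l - 2\<bar> - 2 * \<bar>l\<bar>) * (LINT x|lborel. versine_quotient 1 x) / 4"
    unfolding fejer_mult_cos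
    by (simp add: integrable_versine_quotient integral_versine_quotient[of "l + 2"]
        integral_versine_quotient[of "l - 2"] integral_versine_quotient[of l] algebra_simps)
  also have "\<bar>l + 2\<bar> + \<bar>l - 2\<bar> - 2 * \<bar>l\<bar> = 0"
    using assms by auto
  finally show ?thesis
    by (simp add: fourier_fejer)
qed

lemma fourier_fejer_0: "fourier (\<lambda>x. of_real (fejer x)) 0 = of_real (LINT x|lborel. fejer x)"
  unfolding fourier_fejer by simp

lemma integral_fejer_pos: "0 < (LINT x|lborel. fejer x)"
proof -
  have "fejer x \<noteq> 0" if "x \<in> {0<..<1}" for x
    using that sin_gt_zero[of x] pi_gt3 by (simp add: fejer_def)
  then have "{0<..<1} \<subseteq> {x. fejer x \<noteq> 0}"
    by auto
  then have "emeasure lborel {0<..<1::real} \<le> emeasure lborel {x. fejer x \<noteq> 0}"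
    by (rule emeasure_mono) simp
  then have "0 < emeasure lborel {x. fejer x \<noteq> 0}"
    by (simp add: less_le_trans[OF zero_less_one])
  then have "\<not> (AE x in lborel. fejer x = 0)"
    by (subst AE_iff_measurable[OF _ refl]) auto
  then show ?thesis
    using integral_nonneg_eq_0_iff_AE[OF integrable_fejer] fejer_nonneg
    by (simp add: order_less_le)
qed

definition fejer_tail :: "real \<Rightarrow> real" where
  "fejer_tail L = (LINT y|lborel. indicator {y. L \<le> \<bar>y\<bar>} y * fejer y)"

lemma integrable_fejer_tail: "integrable lborel (\<lambda>y. indicator {y. L \<le> \<bar>y\<bar>} y * fejer y)"
  using integrable_real_mult_indicator[OF _ integrable_fejer, of "{y. L \<le> \<bar>y\<bar>}"]
  by (simp add: mult.commute)

lemma fejer_tail_small: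
  assumes "0 < \<epsilon>"
  shows "\<exists>L>0. fejer_tail L < \<epsilon>"
proof -
  let ?f = "\<lambda>(n::nat) y. indicator {y. real n \<le> \<bar>y\<bar>} y * fejer y"
  have lim: "AE y in lborel. (\<lambda>n. ?f n y) \<longlonglongrightarrow> 0"
  proof (intro AE_I2 tendsto_eventually)
    fix y :: real
    obtain n0 :: nat where "\<bar>y\<bar> < real n0"
      using reals_Archimedean2 by blast
    then show "eventually (\<lambda>n. ?f n y = 0) sequentially"
      unfolding eventually_sequentially by (intro exI[of _ n0]) (auto simp: indicator_def)
  qed
  have bound: "AE y in lborel. norm (?f n y) \<le> fejer y" for n
    by (intro AE_I2) (auto simp: indicator_def fejer_nonneg)
  have "(\<lambda>n. fejer_tail (real n)) \<longlonglongrightarrow> (LINT y|lborel. 0)"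
    unfolding fejer_tail_def
    using Bochner_Integration.integral_dominated_convergence[OF _ _ integrable_fejer lim bound] by simp
  then have "eventually (\<lambda>n. fejer_tail (real n) < \<epsilon>) sequentially"
    using assms by (intro order_tendstoD) auto
  then obtain n where "fejer_tail (real n) < \<epsilon>" "1 \<le> n"
    by (metis eventually_at_top_linorder nle_le)
  then show ?thesis
    by (intro exI[of _ "real n"]) auto
qed

section \<open>Fejer packets\<close>

definition fejer_packet :: "real \<Rightarrow> real \<Rightarrow> real \<Rightarrow> complex" where
  "fejer_packet c w x = of_real (fejer (x - c)) * cis (w * (x - c))"

definition packet_sum :: "(nat \<Rightarrow> real) \<Rightarrow> (nat \<Rightarrow> real) \<Rightarrow> nat set \<Rightarrow> real \<Rightarrow> complex" where
  "packet_sum c w K x = (\<Sum>k\<in>K. fejer_packet (c k) (w k) x)"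

lemma borel_measurable_fejer_packet [measurable]: "fejer_packet c w \<in> borel_measurable borel"
  unfolding fejer_packet_def by measurable

lemma borel_measurable_packet_sum [measurable]: "packet_sum c w K \<in> borel_measurable borel"
  unfolding packet_sum_def by measurable

lemma norm_fejer_packet: "norm (fejer_packet c w x) = fejer (x - c)"
  unfolding fejer_packet_def by (simp add: norm_mult fejer_nonneg)

lemma integrable_fejer_packet: "integrable lborel (fejer_packet c w)"
  by (rule Bochner_Integration.integrable_bound[OF integrable_shift[OF integrable_fejer, of c]])
     (simp_all add: norm_fejer_packet)

lemma integrable_packet_sum: "integrable lborel (packet_sum c w K)"
  unfolding packet_sum_def by (intro Bochner_Integration.integrable_sum integrable_fejer_packet)

lemma fourier_fejer_packet:
  "fourier (fejer_packet c w) u = cis (- (c * u)) * fourier (\<lambda>x. of_real (fejer x)) (u - w)"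
proof -
  have "fejer_packet c w = (\<lambda>x. (\<lambda>y. cis (w * y) * of_real (fejer y)) (x - c))"
    by (simp add: fun_eq_iff fejer_packet_def mult.commute)
  then show ?thesis
    using fourier_shift[of "\<lambda>y. cis (w * y) * of_real (fejer y)" c u]
    by (simp add: fourier_modulation)
qed

lemma fourier_packet_sum:
  "fourier (packet_sum c w K) u = (\<Sum>k\<in>K. cis (- (c k * u)) * fourier (\<lambda>x. of_real (fejer x)) (u - w k))"
  unfolding packet_sum_def
  by (simp add: fourier_sum integrable_fejer_packet fourier_fejer_packet)

lemma L2_packet_sum: "L2 (packet_sum c w K)"
  unfolding L2_def
proof
  let ?F = "\<lambda>x. \<Sum>k\<in>K. fejer (x - c k)"
  have F_nonneg: "0 \<le> ?F x" for x
    by (intro sum_nonneg fejer_nonneg)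
  have bound: "(norm (packet_sum c w K x))\<^sup>2 \<le> real (card K) * ?F x" for x
  proof -
    have "norm (packet_sum c w K x) \<le> ?F x"
      unfolding packet_sum_def by (rule order_trans[OF norm_sum]) (simp add: norm_fejer_packet)
    moreover have "?F x \<le> real (card K)"
      using sum_mono[of K "\<lambda>k. fejer (x - c k)" "\<lambda>_. 1"] fejer_le_1 by simp
    ultimately show ?thesis
      unfolding power2_eq_square by (intro mult_mono) auto
  qed
  show "integrable lborel (\<lambda>x. (norm (packet_sum c w K x))\<^sup>2)"
  proof (rule Bochner_Integration.integrable_bound)
    show "integrable lborel (\<lambda>x. real (card K) * ?F x)"
      by (intro integrable_mult_right Bochner_Integration.integrable_sum integrable_shift integrable_fejer)
    show "AE x in lborel. norm ((norm (packet_sum c w K x))\<^sup>2) \<le> norm (real (card K) * ?F x)"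
      using bound F_nonneg by (intro AE_I2) (simp add: abs_mult)
  qed measurable
qed simp

lemma H1_H2_packet_sum:
  assumes "\<And>k. k \<in> K \<Longrightarrow> 2 \<le> w k"
  shows "H1_H2 (packet_sum c w K)"
  unfolding H1_H2_def L1_def
proof (intro conjI allI impI integrable_packet_sum L2_packet_sum)
  fix u :: real
  assume "u \<le> 0"
  then have "fourier (\<lambda>x. of_real (fejer x)) (u - w k) = 0" if "k \<in> K" for k
    using assms[OF that] by (intro fourier_fejer_eq_0) simp
  then show "fourier (packet_sum c w K) u = 0"
    by (simp add: fourier_packet_sum)
qed

lemma integral_fejer_exp_sum_square:
  assumes "finite K" and sep: "\<And>j k. j \<in> K \<Longrightarrow> k \<in> K \<Longrightarrow> j \<noteq> k \<Longrightarrow> 2 \<le> \<bar>w j - w k\<bar>"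
  shows "(LINT x|lborel. fejer x * (norm (\<Sum>k\<in>K. cis (w k * x)))\<^sup>2) = real (card K) * (LINT x|lborel. fejer x)"
proof -
  let ?e = "\<lambda>l x. of_real (fejer x) * cis (- (x * l))"
  have integrable: "integrable lborel (?e l)" for l
    by (intro integrable_fourier_integrand) (simp add: integrable_fejer)
  have expand: "of_real (fejer x * (norm (\<Sum>k\<in>K. cis (w k * x)))\<^sup>2) = (\<Sum>j\<in>K. \<Sum>k\<in>K. ?e (w k - w j) x)" for x
  proof -
    have cis_diff: "cis (w j * x) * cnj (cis (w k * x)) = cis (- (x * (w k - w j)))" for j k
      by (simp add: cis_cnj cis_mult algebra_simps)
    let ?S = "\<Sum>k\<in>K. cis (w k * x)"
    have "of_real (fejer x * (norm ?S)\<^sup>2) = of_real (fejer x) * (?S * cnj ?S)"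
      by (simp only: of_real_mult complex_norm_square)
    also have "?S * cnj ?S = (\<Sum>j\<in>K. \<Sum>k\<in>K. cis (- (x * (w k - w j))))"
      by (simp only: cnj_sum sum_product cis_diff)
    finally show ?thesis
      by (simp add: sum_distrib_left)
  qed
  have diagonal: "(\<Sum>k\<in>K. fourier (\<lambda>x. of_real (fejer x)) (w k - w j)) = of_real (LINT x|lborel. fejer x)"
    if "j \<in> K" for j
  proof -
    have "(\<Sum>k\<in>K. fourier (\<lambda>x. of_real (fejer x)) (w k - w j))
        = (\<Sum>k\<in>K. if k = j then of_real (LINT x|lborel. fejer x) else 0)"
      using sep[of _ j] that by (intro sum.cong refl) (auto simp: fourier_fejer_0 fourier_fejer_eq_0)
    then show ?thesis
      using \<open>finite K\<close> that by simp
  qed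
  have "of_real (LINT x|lborel. fejer x * (norm (\<Sum>k\<in>K. cis (w k * x)))\<^sup>2)
      = (\<Sum>j\<in>K. \<Sum>k\<in>K. fourier (\<lambda>x. of_real (fejer x)) (w k - w j))"
    unfolding integral_complex_of_real[symmetric] expand fourier_cis
    by (simp add: Bochner_Integration.integral_sum Bochner_Integration.integrable_sum integrable)
  also have "\<dots> = of_real (real (card K) * (LINT x|lborel. fejer x))"
    by (simp add: diagonal)
  finally show ?thesis
    by (simp only: of_real_eq_iff)
qed

lemma weighted_am_gm:
  fixes f y n :: real
  assumes "0 \<le> f" "0 < n"
  shows "f * y \<le> (f * y\<^sup>2 / n + n * f) / 2"
proof -
  have "2 * (y * n) \<le> y\<^sup>2 + n\<^sup>2"
    using sum_squares_bound[of y n] by simp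
  then have "y \<le> (y\<^sup>2 / n + n) / 2"
    using \<open>0 < n\<close> by (simp add: field_simps power2_eq_square)
  then have "f * y \<le> f * ((y\<^sup>2 / n + n) / 2)"
    by (rule mult_left_mono[OF _ \<open>0 \<le> f\<close>])
  also have "\<dots> = (f * y\<^sup>2 / n + n * f) / 2"
    by (simp add: algebra_simps add_divide_distrib)
  finally show ?thesis .
qed

lemma L1norm_fejer_exp_sum_le:
  assumes "finite K" and sep: "\<And>j k. j \<in> K \<Longrightarrow> k \<in> K \<Longrightarrow> j \<noteq> k \<Longrightarrow> 2 \<le> \<bar>w j - w k\<bar>"
  shows "L1norm (\<lambda>x. of_real (fejer x) * (\<Sum>k\<in>K. cis (w k * x)))
           \<le> ennreal ((LINT x|lborel. fejer x) * sqrt (real (card K)))"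
proof (cases "K = {}")
  case False
  let ?A = "LINT x|lborel. fejer x"
  let ?n = "sqrt (real (card K))"
  let ?N = "\<lambda>x. norm (\<Sum>k\<in>K. cis (w k * x))"
  have n: "0 < ?n"
    using False \<open>finite K\<close> by (simp add: card_gt_0_iff)
  have N_le: "?N x \<le> real (card K)" for x
    by (rule order_trans[OF norm_sum]) simp
  have integrable_sum: "integrable lborel (\<lambda>x. of_real (fejer x) * (\<Sum>k\<in>K. cis (w k * x)))"
  proof (rule Bochner_Integration.integrable_bound[OF integrable_mult_left[OF integrable_fejer]])
    show "AE x in lborel. norm (of_real (fejer x) * (\<Sum>k\<in>K. cis (w k * x))) \<le> norm (fejer x * real (card K))"
      using N_le fejer_nonneg by (intro AE_I2) (simp add: norm_mult mult_left_mono)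
  qed measurable
  have integrable_square: "integrable lborel (\<lambda>x. fejer x * (?N x)\<^sup>2)"
  proof (rule Bochner_Integration.integrable_bound[OF integrable_mult_left[OF integrable_fejer]])
    show "AE x in lborel. norm (fejer x * (?N x)\<^sup>2) \<le> norm (fejer x * (real (card K))\<^sup>2)"
      using N_le fejer_nonneg by (intro AE_I2) (simp add: abs_mult mult_left_mono power_mono)
  qed measurable
  \<comment> \<open>AM-GM with the weight \<open>?n\<close>, chosen so that both terms integrate to \<open>?n * ?A\<close>\<close>
  have am_gm: "fejer x * ?N x \<le> (fejer x * (?N x)\<^sup>2 / ?n + ?n * fejer x) / 2" for x
    by (rule weighted_am_gm[OF fejer_nonneg n])
  have "(LINT x|lborel. norm (of_real (fejer x) * (\<Sum>k\<in>K. cis (w k * x))))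
      \<le> (LINT x|lborel. (fejer x * (?N x)\<^sup>2 / ?n + ?n * fejer x) / 2)"
    using am_gm integrable_square integrable_fejer integrable_norm[OF integrable_sum]
    by (intro integral_mono) (auto simp: norm_mult fejer_nonneg)
  also have "\<dots> = (real (card K) * ?A / ?n + ?n * ?A) / 2"
    using integrable_square integrable_fejer
    by (simp add: integral_fejer_exp_sum_square[OF assms])
  also have "\<dots> = ?A * ?n"
    using n by (simp add: field_simps)
  finally show ?thesis
    by (simp add: L1norm_eq_integral[OF integrable_sum] ennreal_leI)
qed (simp add: L1norm_def)

lemma norm_packet_sum_ge:
  assumes "finite K" and sep: "\<And>j k. j \<in> K \<Longrightarrow> k \<in> K \<Longrightarrow> j \<noteq> k \<Longrightarrow> 2 * L \<le> \<bar>c j - c k\<bar>"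
  shows "(\<Sum>k\<in>K. if \<bar>x - c k\<bar> < L then fejer (x - c k) else - fejer (x - c k)) \<le> norm (packet_sum c w K x)"
proof (cases "\<exists>k0\<in>K. \<bar>x - c k0\<bar> < L")
  case False
  then have "(\<Sum>k\<in>K. if \<bar>x - c k\<bar> < L then fejer (x - c k) else - fejer (x - c k)) = (\<Sum>k\<in>K. - fejer (x - c k))"
    by (intro sum.cong) auto
  also have "\<dots> \<le> 0"
    by (intro sum_nonpos) (simp add: fejer_nonneg)
  finally show ?thesis
    by (rule order_trans) simp
next
  case True
  then obtain k0 where k0: "k0 \<in> K" "\<bar>x - c k0\<bar> < L"
    by blast
  \<comment> \<open>\<open>x\<close> is close to at most one of the well separated centres \<open>c k\<close>\<close>
  have far: "\<not> \<bar>x - c k\<bar> < L" if "k \<in> K - {k0}" for k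
    using sep[of k k0] that k0 by auto
  have "(\<Sum>k\<in>K. if \<bar>x - c k\<bar> < L then fejer (x - c k) else - fejer (x - c k))
      = fejer (x - c k0) - (\<Sum>k\<in>K - {k0}. fejer (x - c k))"
    using \<open>finite K\<close> k0 far by (simp add: sum.remove sum_negf[symmetric])
  also have "\<dots> \<le> norm (fejer_packet (c k0) (w k0) x) - norm (\<Sum>k\<in>K - {k0}. fejer_packet (c k) (w k) x)"
    using norm_sum[of "\<lambda>k. fejer_packet (c k) (w k) x" "K - {k0}"] by (simp add: norm_fejer_packet)
  also have "\<dots> \<le> norm (fejer_packet (c k0) (w k0) x + (\<Sum>k\<in>K - {k0}. fejer_packet (c k) (w k) x))"
    by (rule norm_diff_ineq)
  also have "\<dots> = norm (packet_sum c w K x)"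
    unfolding packet_sum_def using \<open>finite K\<close> k0 by (simp add: sum.remove)
  finally show ?thesis .
qed

lemma L1norm_packet_sum_ge:
  assumes "finite K" and sep: "\<And>j k. j \<in> K \<Longrightarrow> k \<in> K \<Longrightarrow> j \<noteq> k \<Longrightarrow> 2 * L \<le> \<bar>c j - c k\<bar>"
  shows "ennreal (real (card K) * ((LINT x|lborel. fejer x) - 2 * fejer_tail L)) \<le> L1norm (packet_sum c w K)"
proof -
  define r where "r y = fejer y - 2 * (indicator {y. L \<le> \<bar>y\<bar>} y * fejer y)" for y
  have r_eq: "r y = (if \<bar>y\<bar> < L then fejer y else - fejer y)" for y
    by (auto simp: r_def indicator_def)
  have integrable_r: "integrable lborel (\<lambda>x. r (x - c))" for c
    unfolding r_def by (intro integrable_shift integrable_fejer integrable_fejer_tail Bochner_Integration.integrable_diff integrable_mult_right)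
  have "(LINT x|lborel. r (x - c)) = (LINT x|lborel. fejer x) - 2 * fejer_tail L" for c
    unfolding integral_shift[of r]
    by (simp add: r_def[abs_def] fejer_tail_def integrable_fejer integrable_fejer_tail)
  then have "real (card K) * ((LINT x|lborel. fejer x) - 2 * fejer_tail L) = (\<Sum>k\<in>K. LINT x|lborel. r (x - c k))"
    by simp
  also have "\<dots> = (LINT x|lborel. (\<Sum>k\<in>K. r (x - c k)))"
    by (rule Bochner_Integration.integral_sum[symmetric]) (rule integrable_r)
  also have "\<dots> \<le> (LINT x|lborel. norm (packet_sum c w K x))"
  proof (rule integral_mono)
    show "(\<Sum>k\<in>K. r (x - c k)) \<le> norm (packet_sum c w K x)" for x
      using norm_packet_sum_ge[OF \<open>finite K\<close> sep] by (simp add: r_eq)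
  qed (auto intro: integrable_r integrable_norm integrable_packet_sum)
  finally show ?thesis
    unfolding L1norm_eq_integral[OF integrable_packet_sum] by (rule ennreal_leI)
qed

section \<open>The multiplier\<close>

lemma not_bounded_H1_multiplierI:
  assumes "\<And>n::nat. \<exists>h g. H1_H2 h \<and> is_Tm m h g \<and> ennreal (real n) * L1norm h < L1norm g"
  shows "\<not> bounded_H1_multiplier m"
proof
  assume "bounded_H1_multiplier m"
  then obtain C where C: "\<And>h g. H1_H2 h \<and> is_Tm m h g \<Longrightarrow> L1norm g \<le> ennreal C * L1norm h"
    unfolding bounded_H1_multiplier_def by blast
  obtain h g where hg: "H1_H2 h" "is_Tm m h g" and less: "ennreal (real (nat \<lceil>C\<rceil>)) * L1norm h < L1norm g"
    using assms by blast
  have "ennreal C \<le> ennreal (real (nat \<lceil>C\<rceil>))"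
    by (intro ennreal_leI) linarith
  then have "L1norm g \<le> ennreal (real (nat \<lceil>C\<rceil>)) * L1norm h"
    using C[OF conjI[OF hg]] by (meson mult_right_mono order_trans zero_le)
  with less show False
    by simp
qed

text \<open>\<open>7/8 * 2^k\<close> is the centre of the plateau \<open>[3/4 * 2^k, 2^k]\<close> of \<open>\<psi>\<^sub>k\<close>; for \<open>k \<ge> 4\<close> the spectrum
  \<open>[7/8 * 2^k - 2, 7/8 * 2^k + 2]\<close> of a Fejer packet with this frequency lies inside it.\<close>

definition plateau_freq :: "nat \<Rightarrow> real" where
  "plateau_freq k = 7/8 * 2 ^ k"

lemma plateau_freq_ge_2: "2 \<le> k \<Longrightarrow> 2 \<le> plateau_freq k"
  using power_increasing[of 2 k "2::real"] by (simp add: plateau_freq_def)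

lemma plateau_freq_separated:
  assumes "2 \<le> j" "2 \<le> k" "j \<noteq> k"
  shows "2 \<le> \<bar>plateau_freq j - plateau_freq k\<bar>"
proof -
  have gap: "2 \<le> plateau_freq q - plateau_freq p" if "2 \<le> p" "p < q" for p q
  proof -
    have "(2::real) ^ Suc p \<le> 2 ^ q"
      using that by (intro power_increasing) auto
    moreover have "(2::real) ^ 2 \<le> 2 ^ p"
      using that by (intro power_increasing) auto
    ultimately show ?thesis
      unfolding plateau_freq_def by simp
  qed
  show ?thesis
    using gap[of j k] gap[of k j] assms by (cases "j < k") auto
qed

lemma L1norm_plateau_packets_le:
  assumes "finite K" "\<And>k. k \<in> K \<Longrightarrow> 2 \<le> k"
  shows "L1norm (packet_sum (\<lambda>_. 0) plateau_freq K) \<le> ennreal ((LINT x|lborel. fejer x) * sqrt (real (card K)))"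
proof -
  have "packet_sum (\<lambda>_. 0) plateau_freq K = (\<lambda>x. of_real (fejer x) * (\<Sum>k\<in>K. cis (plateau_freq k * x)))"
    by (simp add: fun_eq_iff packet_sum_def fejer_packet_def sum_distrib_left)
  then show ?thesis
    using assms(2) by (simp add: L1norm_fejer_exp_sum_le[OF assms(1)] plateau_freq_separated)
qed

lemma L1norm_progression_packets_ge:
  assumes "0 < L" "finite K"
  shows "ennreal (real (card K) * ((LINT x|lborel. fejer x) - 2 * fejer_tail L))
           \<le> L1norm (packet_sum (\<lambda>k. 2 * L * real k) w K)"
proof (rule L1norm_packet_sum_ge[OF assms(2)])
  fix j k :: nat
  assume "j \<noteq> k"
  then have "1 \<le> \<bar>real j - real k\<bar>"
    by (cases "j < k") auto
  then show "2 * L \<le> \<bar>2 * L * real j - 2 * L * real k\<bar>"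
    using \<open>0 < L\<close> mult_left_mono[of 1 "\<bar>real j - real k\<bar>" "2 * L"]
    by (simp add: abs_mult right_diff_distrib[symmetric])
qed

locale plateau_psi =
  fixes \<psi> :: "real \<Rightarrow> real"
  assumes admissible: "admissible_psi \<psi>"
    and plateau: "\<And>t. t \<in> {3/4..1} \<Longrightarrow> \<psi> t = 1"
begin

text \<open>The partition of unity and the plateau on \<open>[3/4, 1]\<close> force \<open>\<psi> (1/2) = 0\<close> and
  \<open>\<psi> = 0\<close> on \<open>[3/2, 2]\<close>.\<close>

lemma psi_support: "\<psi> t \<noteq> 0 \<Longrightarrow> 1/2 < t \<and> t < 3/2"
proof (rule ccontr)
  assume "\<psi> t \<noteq> 0" "\<not> (1/2 < t \<and> t < 3/2)"
  then consider "t = 1/2" | "3/2 \<le> t" "t \<le> 2"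
    using admissible unfolding admissible_psi_def by force
  then show False
  proof cases
    case 1
    then show False
      using \<open>\<psi> t \<noteq> 0\<close> admissible plateau[of 1] unfolding admissible_psi_def by force
  next
    case 2
    then have "\<psi> t + \<psi> (t / 2) = 1"
      using admissible unfolding admissible_psi_def by auto
    moreover have "\<psi> (t / 2) = 1"
      using 2 plateau by auto
    ultimately show False
      using \<open>\<psi> t \<noteq> 0\<close> by simp
  qed
qed

lemma psi_bounded: "\<exists>B. \<forall>t. \<bar>\<psi> t\<bar> \<le> B"
proof -
  have "bounded (range (\<lambda>t. \<bar>t\<bar> ^ 0 * \<bar>(deriv ^^ 0) \<psi> t\<bar>))"
    using admissible unfolding admissible_psi_def schwartz_def by blast
  then show ?thesis
    by (auto simp: bounded_iff)
qed

lemma psi_differentiable: "((deriv ^^ k) \<psi>) differentiable (at x)"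
  using admissible unfolding admissible_psi_def schwartz_def smooth_fun_def by blast

lemma psi_has_deriv: "(\<psi> has_real_derivative deriv \<psi> x) (at x)"
  using psi_differentiable[of 0 x] by (simp add: DERIV_deriv_iff_real_differentiable)

lemma deriv_psi_has_deriv: "(deriv \<psi> has_real_derivative deriv (deriv \<psi>) x) (at x)"
  using psi_differentiable[of 1 x] by (simp add: DERIV_deriv_iff_real_differentiable)

lemma psi_chain [derivative_intros]:
  "(g has_real_derivative g') (at x) \<Longrightarrow> ((\<lambda>x. \<psi> (g x)) has_real_derivative deriv \<psi> (g x) * g') (at x)"
  using DERIV_chain'[OF _ psi_has_deriv] by simp

lemma deriv_psi_chain [derivative_intros]:
  "(g has_real_derivative g') (at x) \<Longrightarrow>
     ((\<lambda>x. deriv \<psi> (g x)) has_real_derivative deriv (deriv \<psi>) (g x) * g') (at x)"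
  using DERIV_chain'[OF _ deriv_psi_has_deriv] by simp

lemma continuous_psi: "continuous_on S \<psi>"
  using psi_has_deriv by (meson DERIV_isCont continuous_at_imp_continuous_on)

lemma continuous_deriv_psi: "continuous_on S (deriv \<psi>)"
  using deriv_psi_has_deriv by (meson DERIV_isCont continuous_at_imp_continuous_on)

lemma continuous_deriv2_psi: "continuous_on S (deriv (deriv \<psi>))"
  using psi_differentiable[of 2] differentiable_imp_continuous_within
  by (auto simp: numeral_2_eq_2 intro!: continuous_at_imp_continuous_on)

lemma continuous_on_psi_compose [continuous_intros]:
  "continuous_on S f \<Longrightarrow> continuous_on S (\<lambda>x. \<psi> (f x))"
  "continuous_on S f \<Longrightarrow> continuous_on S (\<lambda>x. deriv \<psi> (f x))"
  "continuous_on S f \<Longrightarrow> continuous_on S (\<lambda>x. deriv (deriv \<psi>) (f x))"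
  by (auto intro: continuous_on_compose2[OF continuous_psi] continuous_on_compose2[OF continuous_deriv_psi]
      continuous_on_compose2[OF continuous_deriv2_psi])

lemma continuous_psi_k: "continuous_on S (psi_k \<psi> j)"
  unfolding psi_k_def by (intro continuous_on_compose2[OF continuous_psi] continuous_intros) auto

lemma psi_k_nonzero_bounds:
  assumes "psi_k \<psi> j u \<noteq> 0"
  shows "2 powr (real_of_int j - 1) < u" "u < 3/2 * 2 powr real_of_int j"
proof -
  let ?s = "2 powr (- real_of_int j) * u"
  have s: "1/2 < ?s" "?s < 3/2"
    using psi_support assms unfolding psi_k_def by fastforce+
  have u: "2 powr real_of_int j * ?s = u"
    by (simp add: powr_minus)
  have p: "0 < 2 powr real_of_int j"
    by simp
  show "2 powr (real_of_int j - 1) < u"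
    using mult_strict_left_mono[OF s(1) p, unfolded u] by (simp add: powr_diff)
  show "u < 3/2 * 2 powr real_of_int j"
    using mult_strict_left_mono[OF s(2) p, unfolded u] by (simp add: mult.commute)
qed

lemma psi_k_nonzero:
  assumes "psi_k \<psi> j u \<noteq> 0"
  shows "0 < u" "\<bar>log 2 u - real_of_int j\<bar> < 1"
proof -
  note bounds = psi_k_nonzero_bounds[OF assms]
  have "(0::real) < 2 powr (real_of_int j - 1)"
    by simp
  then show "0 < u"
    using bounds(1) by linarith
  moreover have "u < 2 powr real_of_int j * 2"
    using bounds(2) powr_gt_zero[of 2 "real_of_int j"] by linarith
  then have "u < 2 powr (real_of_int j + 1)"
    by (simp add: powr_add)
  ultimately have "log 2 u < real_of_int j + 1" "real_of_int j - 1 < log 2 u"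
    using bounds(1) by (simp_all add: less_log_iff log_less_iff)
  then show "\<bar>log 2 u - real_of_int j\<bar> < 1"
    by linarith
qed

lemma psi_k_support_window: "{j. psi_k \<psi> j u \<noteq> 0} \<subseteq> {\<lfloor>log 2 u\<rfloor> - 1 .. \<lfloor>log 2 u\<rfloor> + 1}"
proof
  fix j
  assume "j \<in> {j. psi_k \<psi> j u \<noteq> 0}"
  then have "\<bar>log 2 u - real_of_int j\<bar> < 1"
    using psi_k_nonzero(2) by blast
  then have "j - 1 \<le> \<lfloor>log 2 u\<rfloor>" "\<lfloor>log 2 u\<rfloor> \<le> j + 1"
    by (simp_all add: le_floor_iff floor_le_iff abs_less_iff)
  then show "j \<in> {\<lfloor>log 2 u\<rfloor> - 1 .. \<lfloor>log 2 u\<rfloor> + 1}"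
    by simp
qed

text \<open>The sum over all \<open>j \<in> \<int>\<close>, written over its finitely many nonzero terms
  (cf. \<open>psi_k_support_window\<close>).\<close>

definition phase_multiplier :: "(int \<Rightarrow> real) \<Rightarrow> real \<Rightarrow> complex" where
  "phase_multiplier a u = (\<Sum>j | psi_k \<psi> j u \<noteq> 0. cis (- (a j * u)) * of_real (psi_k \<psi> j u))"

lemma phase_multiplier_eq_sum:
  assumes "finite F" "\<And>j. psi_k \<psi> j u \<noteq> 0 \<Longrightarrow> j \<in> F"
  shows "phase_multiplier a u = (\<Sum>j\<in>F. cis (- (a j * u)) * of_real (psi_k \<psi> j u))"
  unfolding phase_multiplier_def using assms by (intro sum.mono_neutral_left) auto

lemma phase_multiplier_eq_near:
  assumes "\<bar>log 2 u - log 2 u0\<bar> < 1"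
  shows "phase_multiplier a u =
           (\<Sum>j\<in>{\<lfloor>log 2 u0\<rfloor> - 2 .. \<lfloor>log 2 u0\<rfloor> + 2}. cis (- (a j * u)) * of_real (psi_k \<psi> j u))"
proof (rule phase_multiplier_eq_sum)
  fix j
  assume "psi_k \<psi> j u \<noteq> 0"
  then have "\<bar>log 2 u0 - real_of_int j\<bar> < 2"
    using psi_k_nonzero(2) assms by fastforce
  then have "j - 2 \<le> \<lfloor>log 2 u0\<rfloor>" "\<lfloor>log 2 u0\<rfloor> \<le> j + 2"
    by (simp_all add: le_floor_iff floor_le_iff abs_less_iff)
  then show "j \<in> {\<lfloor>log 2 u0\<rfloor> - 2 .. \<lfloor>log 2 u0\<rfloor> + 2}"
    by simp
qed simp

lemma continuous_phase_multiplier: "continuous_on {0<..} (phase_multiplier a)"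
proof (rule continuous_at_imp_continuous_on, intro ballI)
  fix u0 :: real
  assume "u0 \<in> {0<..}"
  let ?F = "{\<lfloor>log 2 u0\<rfloor> - 2 .. \<lfloor>log 2 u0\<rfloor> + 2}"
  have "isCont (log 2) u0"
    using \<open>u0 \<in> {0<..}\<close> by (auto intro!: continuous_intros)
  then have "(log 2 \<longlongrightarrow> log 2 u0) (nhds u0)"
    by (simp add: isCont_def tendsto_at_iff_tendsto_nhds)
  then have "eventually (\<lambda>u. dist (log 2 u) (log 2 u0) < 1) (nhds u0)"
    by (rule tendstoD) simp
  then have ev: "eventually (\<lambda>u. phase_multiplier a u = (\<Sum>j\<in>?F. cis (- (a j * u)) * of_real (psi_k \<psi> j u))) (nhds u0)"
    by (rule eventually_mono) (simp add: dist_real_def phase_multiplier_eq_near)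
  have "continuous_on UNIV (\<lambda>u. \<Sum>j\<in>?F. cis (- (a j * u)) * of_real (psi_k \<psi> j u))"
    by (intro continuous_intros continuous_psi_k)
  then show "isCont (phase_multiplier a) u0"
    using isCont_cong[OF ev] by (simp add: continuous_on_eq_continuous_at)
qed

lemma bounded_phase_multiplier: "bounded (range (phase_multiplier a))"
proof -
  obtain B where B: "\<And>t. \<bar>\<psi> t\<bar> \<le> B"
    using psi_bounded by blast
  have "norm (phase_multiplier a u) \<le> 3 * B" for u
  proof -
    let ?F = "{\<lfloor>log 2 u\<rfloor> - 1 .. \<lfloor>log 2 u\<rfloor> + 1}"
    have "phase_multiplier a u = (\<Sum>j\<in>?F. cis (- (a j * u)) * of_real (psi_k \<psi> j u))"
      by (intro phase_multiplier_eq_sum) (use psi_k_support_window[of u] in auto)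
    also have "norm \<dots> \<le> (\<Sum>j\<in>?F. B)"
      by (rule order_trans[OF norm_sum], intro sum_mono) (simp add: norm_mult psi_k_def B)
    finally show ?thesis
      by simp
  qed
  then show ?thesis
    unfolding bounded_iff by blast
qed

lemma psi_k_plateau:
  assumes "3/4 * 2 powr k \<le> u" "u \<le> 2 powr k"
  shows "psi_k \<psi> k u = 1" and "psi_k \<psi> j u \<noteq> 0 \<Longrightarrow> j = k"
proof -
  have "2 powr (- real_of_int k) * 2 powr real_of_int k = 1"
    by (simp add: powr_add[symmetric])
  then have "3/4 \<le> 2 powr (- real_of_int k) * u" "2 powr (- real_of_int k) * u \<le> 1"
    using mult_left_mono[OF assms(1), of "2 powr (- real_of_int k)"]
      mult_left_mono[OF assms(2), of "2 powr (- real_of_int k)"]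
    by (simp_all add: mult.left_commute)
  then show "psi_k \<psi> k u = 1"
    using plateau by (simp add: psi_k_def)
  assume "psi_k \<psi> j u \<noteq> 0"
  note bounds = psi_k_nonzero_bounds[OF this]
  show "j = k"
  proof (rule ccontr)
    assume "j \<noteq> k"
    then consider "k + 1 \<le> j" | "j + 1 \<le> k"
      by linarith
    then show False
    proof cases
      case 1
      then have "2 powr real_of_int k \<le> 2 powr (real_of_int j - 1)"
        by (intro powr_mono) auto
      then show False
        using assms(2) bounds(1) by linarith
    next
      case 2
      then have "2 powr real_of_int j \<le> 2 powr (real_of_int k - 1)"
        by (intro powr_mono) auto
      then show False
        using assms(1) bounds(2) by (simp add: powr_diff)
    qed
  qed
qed

lemma phase_multiplier_plateau:
  assumes "3/4 * 2 powr k \<le> u" "u \<le> 2 powr k"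
  shows "phase_multiplier a u = cis (- (a k * u))"
proof -
  have "phase_multiplier a u = (\<Sum>j\<in>{k}. cis (- (a j * u)) * of_real (psi_k \<psi> j u))"
    by (rule phase_multiplier_eq_sum) (use psi_k_plateau(2)[OF assms] in auto)
  then show ?thesis
    by (simp add: psi_k_plateau(1)[OF assms])
qed

definition psi_overlap :: "real \<Rightarrow> real \<Rightarrow> real" where
  "psi_overlap c v = \<psi> (c * v) * \<psi> v"

lemma psi_overlap_has_deriv:
  "(psi_overlap c has_real_derivative c * deriv \<psi> (c * v) * \<psi> v + \<psi> (c * v) * deriv \<psi> v) (at v)"
  unfolding psi_overlap_def[abs_def]
  by (auto intro!: derivative_eq_intros psi_has_deriv simp: algebra_simps)

lemma psi_overlap_has_deriv2:
  "((\<lambda>v. c * deriv \<psi> (c * v) * \<psi> v + \<psi> (c * v) * deriv \<psi> v) has_real_derivative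
     c\<^sup>2 * deriv (deriv \<psi>) (c * v) * \<psi> v + 2 * c * deriv \<psi> (c * v) * deriv \<psi> v
       + \<psi> (c * v) * deriv (deriv \<psi>) v) (at v)"
  by (auto intro!: derivative_eq_intros psi_has_deriv deriv_psi_has_deriv simp: algebra_simps power2_eq_square)

lemma psi_overlap_support: "v \<notin> {1/2..3/2} \<Longrightarrow> psi_overlap c v = 0"
  using psi_support[of v] by (auto simp: psi_overlap_def)

lemma continuous_psi_overlap: "continuous_on S (psi_overlap c)"
  unfolding psi_overlap_def[abs_def] by (intro continuous_intros)

lemma L1norm_fourier_psi_overlap: "L1norm (fourier (\<lambda>v. of_real (psi_overlap c v))) < \<infinity>"
  by (rule L1norm_fourier_C2_compact_support[OF psi_overlap_has_deriv psi_overlap_has_deriv2,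
        where a = "1/2" and b = "3/2"])
     (auto intro!: continuous_intros psi_overlap_support)

lemma m_psi_k_phase_multiplier:
  "m_psi_k (phase_multiplier a) \<psi> k t =
     (\<Sum>d\<in>{-1..1}. cis (- a (k + d) * t) *
        of_real (psi_overlap (2 powr - real_of_int d) (2 powr - real_of_int k * t)))"
proof (cases "psi_k \<psi> k t = 0")
  case True
  then show ?thesis
    by (simp add: m_psi_k_def psi_k_def psi_overlap_def)
next
  case False
  note k = psi_k_nonzero[OF False]
  have "phase_multiplier a t = (\<Sum>j\<in>{k-1..k+1}. cis (- (a j * t)) * of_real (psi_k \<psi> j t))"
  proof (rule phase_multiplier_eq_sum)
    fix j
    assume "psi_k \<psi> j t \<noteq> 0"
    then have "\<bar>real_of_int j - real_of_int k\<bar> < 2"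
      using psi_k_nonzero(2) k(2) by fastforce
    then show "j \<in> {k-1..k+1}"
      by (simp add: abs_less_iff)
  qed simp
  also have "\<dots> = (\<Sum>d\<in>{-1..1}. cis (- (a (k + d) * t)) * of_real (psi_k \<psi> (k + d) t))"
    by (rule sum.reindex_bij_witness[of _ "\<lambda>d. k + d" "\<lambda>j. j - k"]) auto
  finally have "m_psi_k (phase_multiplier a) \<psi> k t =
      (\<Sum>d\<in>{-1..1}. cis (- (a (k + d) * t)) * of_real (psi_k \<psi> (k + d) t * psi_k \<psi> k t))"
    using k(1) by (simp add: m_psi_k_def sum_distrib_right mult.assoc)
  moreover have "psi_k \<psi> (k + d) t * psi_k \<psi> k t = psi_overlap (2 powr - real_of_int d) (2 powr - real_of_int k * t)" for d
    by (simp add: psi_k_def psi_overlap_def powr_add[symmetric] mult.assoc[symmetric] add.commute)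
  ultimately show ?thesis
    by simp
qed

lemma L1norm_fourier_m_psi_k_le:
  "L1norm (fourier (m_psi_k (phase_multiplier a) \<psi> k))
     \<le> (\<Sum>d\<in>{-1..1}. L1norm (fourier (\<lambda>v. of_real (psi_overlap (2 powr - real_of_int d) v))))"
proof -
  let ?P = "\<lambda>d v. of_real (psi_overlap (2 powr - real_of_int d) v) :: complex"
  let ?s = "2 powr - real_of_int k"
  let ?term = "\<lambda>d t. cis (- a (k + d) * t) * ?P d (?s * t)"
  have integrable: "integrable lborel (?P d)" for d
    by (rule integrable_continuous_compact_support[where a = "1/2" and b = "3/2"])
       (auto intro!: continuous_intros continuous_psi_overlap psi_overlap_support)
  have measurable [measurable]: "?P d \<in> borel_measurable borel" for d
    using integrable by auto
  have "fourier (m_psi_k (phase_multiplier a) \<psi> k) = (\<lambda>x. \<Sum>d\<in>{-1..1}. fourier (?term d) x)"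
    unfolding m_psi_k_phase_multiplier
    by (intro ext fourier_sum integrable_modulated_dilation integrable) simp
  then have "L1norm (fourier (m_psi_k (phase_multiplier a) \<psi> k)) \<le> (\<Sum>d\<in>{-1..1}. L1norm (fourier (?term d)))"
    by (simp add: L1norm_sum_le)
  also have "\<dots> = (\<Sum>d\<in>{-1..1}. L1norm (fourier (?P d)))"
    by (intro sum.cong refl L1norm_fourier_modulated_dilation) auto
  finally show ?thesis .
qed

lemma SUP_L1norm_fourier_m_psi_k: "(SUP k::int. L1norm (fourier (m_psi_k (phase_multiplier a) \<psi> k))) < \<infinity>"
  using L1norm_fourier_psi_overlap
  by (intro le_less_trans[OF SUP_least[OF L1norm_fourier_m_psi_k_le]]) simp

lemma phase_multiplier_mult_fourier_fejer:
  assumes "4 \<le> k"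
  shows "indicator {0<..} u * phase_multiplier a u * fourier (\<lambda>x. of_real (fejer x)) (u - plateau_freq k)
       = cis (- (a (int k) * u)) * fourier (\<lambda>x. of_real (fejer x)) (u - plateau_freq k)"
proof (cases "2 \<le> \<bar>u - plateau_freq k\<bar>")
  case True
  then show ?thesis
    by (simp add: fourier_fejer_eq_0)
next
  case False
  have "(2::real) ^ 4 \<le> 2 ^ k"
    using assms by (intro power_increasing) auto
  then have "3/4 * 2 powr real_of_int (int k) \<le> u" "u \<le> 2 powr real_of_int (int k)" "0 < u"
    using False by (auto simp: plateau_freq_def powr_realpow abs_less_iff)
  then show ?thesis
    by (simp add: phase_multiplier_plateau)
qed

lemma is_Tm_packet_sum:
  assumes "\<And>k. k \<in> K \<Longrightarrow> 4 \<le> k"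
  shows "is_Tm (phase_multiplier a) (packet_sum (\<lambda>_. 0) plateau_freq K) (packet_sum (\<lambda>k. a (int k)) plateau_freq K)"
  unfolding is_Tm_def
proof (intro conjI allI impI L2_packet_sum)
  fix \<phi> :: "real \<Rightarrow> complex"
  assume "L1 \<phi> \<and> L2 \<phi>"
  then have \<phi>: "integrable lborel \<phi>"
    by (simp add: L1_def)
  have "fourier (packet_sum (\<lambda>k. a (int k)) plateau_freq K) u
      = indicator {0<..} u * phase_multiplier a u * fourier (packet_sum (\<lambda>_. 0) plateau_freq K) u" for u
    unfolding fourier_packet_sum sum_distrib_left
    by (intro sum.cong refl) (simp add: phase_multiplier_mult_fourier_fejer assms)
  then show "(LINT x|lborel. packet_sum (\<lambda>k. a (int k)) plateau_freq K x * fourier \<phi> x)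
      = (LINT u|lborel. indicator {0<..} u * phase_multiplier a u * fourier (packet_sum (\<lambda>_. 0) plateau_freq K) u * \<phi> u)"
    by (simp add: fourier_multiplication_formula[OF integrable_packet_sum \<phi>])
qed

lemma phase_multiplier_not_bounded_H1:
  assumes "0 < L" and tail: "fejer_tail L < (LINT x|lborel. fejer x) / 4"
  shows "\<not> bounded_H1_multiplier (phase_multiplier (\<lambda>j. 2 * L * real_of_int j))"
proof (rule not_bounded_H1_multiplierI)
  fix n :: nat
  let ?A = "LINT x|lborel. fejer x"
  define N where "N = 2 * n + 1"
  define K where "K = {4..<N\<^sup>2 + 4}"
  let ?h = "packet_sum (\<lambda>_. 0) plateau_freq K"
  let ?g = "packet_sum (\<lambda>k. 2 * L * real k) plateau_freq K"
  have K: "finite K" "card K = N\<^sup>2" "\<And>k. k \<in> K \<Longrightarrow> 4 \<le> k" "\<And>k. k \<in> K \<Longrightarrow> 2 \<le> k"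
    by (auto simp: K_def)
  have upper: "L1norm ?h \<le> ennreal (?A * N)"
    using L1norm_plateau_packets_le[OF K(1,4)] by (simp add: K(2))
  have lower: "ennreal (N\<^sup>2 * (?A - 2 * fejer_tail L)) \<le> L1norm ?g"
    using L1norm_progression_packets_ge[OF \<open>0 < L\<close> K(1)] by (simp add: K(2))
  have A: "0 < ?A"
    by (rule integral_fejer_pos)
  have "ennreal (real n) * L1norm ?h \<le> ennreal (real n) * ennreal (?A * N)"
    by (rule mult_left_mono[OF upper]) simp
  also have "\<dots> = ennreal (real n * (?A * N))"
    using A by (simp add: ennreal_mult)
  also have "\<dots> < ennreal (N\<^sup>2 * (?A - 2 * fejer_tail L))"
  proof (rule ennreal_lessI)
    show "0 < N\<^sup>2 * (?A - 2 * fejer_tail L)"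
      using A tail by (simp add: N_def)
  next
    have "real n * (?A * N) \<le> N\<^sup>2 * (?A / 2)"
      using A by (simp add: N_def power2_eq_square field_simps)
    also have "\<dots> < N\<^sup>2 * (?A - 2 * fejer_tail L)"
      using tail by (simp add: N_def)
    finally show "real n * (?A * N) < N\<^sup>2 * (?A - 2 * fejer_tail L)" .
  qed
  also have "\<dots> \<le> L1norm ?g"
    by (rule lower)
  finally have "ennreal (real n) * L1norm ?h < L1norm ?g" .
  moreover have "H1_H2 ?h"
    by (intro H1_H2_packet_sum plateau_freq_ge_2 K(4))
  moreover have "is_Tm (phase_multiplier (\<lambda>j. 2 * L * real_of_int j)) ?h ?g"
    using is_Tm_packet_sum[OF K(3), where a = "\<lambda>j. 2 * L * real_of_int j"] by simp
  ultimately show "\<exists>h g. H1_H2 h \<and> is_Tm (phase_multiplier (\<lambda>j. 2 * L * real_of_int j)) h g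
      \<and> ennreal (real n) * L1norm h < L1norm g"
    by blast
qed

end

theorem mainTheorem15:
  fixes \<psi> :: "real \<Rightarrow> real"
  assumes "admissible_psi \<psi>"
    and "\<forall>t\<in>{3/4..1}. \<psi> t = 1"
  shows "\<exists>m :: real \<Rightarrow> complex.
           continuous_on {0<..} m \<and> bounded (m ` {0<..}) \<and>
           (SUP k::int. L1norm (fourier (m_psi_k m \<psi> k))) < top \<and>
           \<not> bounded_H1_multiplier m"
proof -
  have \<psi>: "plateau_psi \<psi>"
    using assms by unfold_locales auto
  obtain L where L: "0 < L" "fejer_tail L < (LINT x|lborel. fejer x) / 4"
    using fejer_tail_small[of "(LINT x|lborel. fejer x) / 4"] integral_fejer_pos by auto
  let ?m = "plateau_psi.phase_multiplier \<psi> (\<lambda>j. 2 * L * real_of_int j)"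
  have "continuous_on {0<..} ?m" "bounded (range ?m)"
    "(SUP k::int. L1norm (fourier (m_psi_k ?m \<psi> k))) < \<infinity>" "\<not> bounded_H1_multiplier ?m"
    using plateau_psi.continuous_phase_multiplier[OF \<psi>] plateau_psi.bounded_phase_multiplier[OF \<psi>]
      plateau_psi.SUP_L1norm_fourier_m_psi_k[OF \<psi>] plateau_psi.phase_multiplier_not_bounded_H1[OF \<psi> L]
    by blast+
  then show ?thesis
    by (intro exI[of _ ?m]) (auto intro: bounded_subset)
qed

end
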